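(* Let $\delta>1$ and let $P_1,\dots,P_n\in\mathbb{R}^d$ be distinct points such that every pairwise distance $c_{ij}=\|P_i-P_j\|$ ($i\neq j$) lies in $\{1,\delta\}$. Suppose the points are labeled so that $c_{in}=1$ for $1\le i\le h$ and $c_{in}=\delta$ for $h<i\le n-1$ (for some $0\le h\le n-1$). Let $M$ be the $(n-1)\times(n-1)$ matrix $M=(c_{in}^2+c_{jn}^2-c_{ij}^2)_{i,j=1}^{n-1}$ (with $c_{ii}=0$), let \[ D=\begin{bmatrix}(-3+\delta^2)J_h & -(1+\delta^2)J_{h,n-h-1}\\ -(1+\delta^2)J_{n-h-1,h} & (1-3\delta^2)J_{n-h-1}\end{bmatrix} \] (with $J_{p,q}$ the $p\times q$ all-ones matrix, $J_p=J_{p,p}$), and let \[ S=\frac{2M+D-(1+\delta^2)I_{n-1}}{\delta^2-1}. \] Let $\lambda_1\ge\lambda_2\ge\dots\ge\lambda_{n-1}$ be the eigenvalues of $S$ counted with multiplicity. Then $\lambda_i=\frac{1+\delta^2}{1-\delta^2}$ for every index $i$ with $d+2\le i\le n-2$, and $\lambda_{n-1}\le\frac{1+\delta^2}{1-\delta^2}$ whenever $n\ge d+3$. That is, $S$ has smallest eigenvalue $\lambda_{n-1}$ (counted once) and second smallest eigenvalue $\frac{1+\delta^2}{1-\delta^2}$, the latter with multiplicity at least $n-d-3$.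
   Context: $S$ is a Seidel matrix: a real symmetric matrix with zero diagonal and all off-diagonal entries equal to $\pm1$. The matrix $M$ is positive semidefinite of rank at most $d$ (it is twice the Gram matrix of the vectors $P_i-P_n$). *)

theory Defs
  imports "HOL-Analysis.Analysis" "Jordan_Normal_Form.Char_Poly"
begin

definition cdist :: "(nat \<Rightarrow> 'a::metric_space) \<Rightarrow> nat \<Rightarrow> nat \<Rightarrow> real" where
  "cdist P i j = dist (P i) (P j)"

text \<open>The (n-1)x(n-1) matrix M; matrix index k (0-based) corresponds to point k+1.\<close>
definition Mmat :: "(nat \<Rightarrow> 'a::metric_space) \<Rightarrow> nat \<Rightarrow> real mat" where
  "Mmat P n = mat (n - 1) (n - 1) (\<lambda>(i, j).
      (cdist P (i+1) n)^2 + (cdist P (j+1) n)^2 - (cdist P (i+1) (j+1))^2)"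

definition Dmat :: "real \<Rightarrow> nat \<Rightarrow> nat \<Rightarrow> real mat" where
  "Dmat \<delta> n h = mat (n - 1) (n - 1) (\<lambda>(i, j).
      if i < h \<and> j < h then -3 + \<delta>^2
      else if h \<le> i \<and> h \<le> j then 1 - 3 * \<delta>^2
      else -(1 + \<delta>^2))"

definition Smat :: "real \<Rightarrow> (nat \<Rightarrow> 'a::metric_space) \<Rightarrow> nat \<Rightarrow> nat \<Rightarrow> real mat" where
  "Smat \<delta> P n h = (1 / (\<delta>^2 - 1)) \<cdot>\<^sub>m
      (2 \<cdot>\<^sub>m Mmat P n + Dmat \<delta> n h - (1 + \<delta>^2) \<cdot>\<^sub>m 1\<^sub>m (n - 1))"

text \<open>es is the list of eigenvalues of A counted with multiplicity (roots of the
  characteristic polynomial), in non-increasing order.\<close>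
definition eigvals_desc :: "real mat \<Rightarrow> real list \<Rightarrow> bool" where
  "eigvals_desc A es \<longleftrightarrow> char_poly A = (\<Prod>a\<leftarrow>es. [:-a, 1:]) \<and> sorted_wrt (\<ge>) es"

end

theory Submission
  imports Defs "Jordan_Normal_Form.Schur_Decomposition"
begin

text \<open>Write \<open>c = (1 + \<delta>\<^sup>2) / (1 - \<delta>\<^sup>2)\<close>, so that
  \<open>(\<delta>\<^sup>2 - 1) (S - c I) = 2 M + D\<close>. For \<open>x \<in> \<real>\<^bsup>n - 1\<^esup>\<close> the quadratic form
  of \<open>2 M\<close> is \<open>4 \<parallel>\<Sum>\<^sub>k x\<^sub>k (P\<^sub>k - P\<^sub>n)\<parallel>\<^sup>2\<close>, and that of \<open>D\<close> is
  \<open>(u + v) ((1 - 3\<delta>\<^sup>2) v - (3 - \<delta>\<^sup>2) u)\<close>, where \<open>u\<close> and \<open>v\<close> are the sums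
  of the coordinates of \<open>x\<close> in the two blocks. Hence the form of \<open>S - c I\<close> is
  \<open>\<le> 0\<close> on the subspace \<open>\<Sum>\<^sub>k x\<^sub>k (P\<^sub>k - P\<^sub>n) = 0, u = 0\<close>, of codimension
  at most \<open>d + 1\<close>, and \<open>\<ge> 0\<close> on the hyperplane \<open>u + v = 0\<close>. By the
  Courant--Fischer principle at most \<open>d + 1\<close> eigenvalues of \<open>S\<close> exceed \<open>c\<close>
  and at most one lies below \<open>c\<close>.\<close>

section \<open>Orthogonal diagonalization of real symmetric matrices\<close>

lemma orthogonal_mat_with_first_col:
  fixes v :: "real vec"
  assumes v: "v \<in> carrier_vec n" and v0: "v \<noteq> 0\<^sub>v n"
  obtains U r where "U \<in> carrier_mat n n" "U\<^sup>T * U = 1\<^sub>m n" "col U 0 = r \<cdot>\<^sub>v v"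
proof -
  interpret cof_vec_space n "TYPE(real)" .
  define ws where "ws = gram_schmidt n (basis_completion v)"
  note b = basis_completion[OF v v0]
  from gram_schmidt_result[OF b(2,4,5) ws_def]
  have ws: "set ws \<subseteq> carrier_vec n" "corthogonal ws" "length ws = n"
    using b(6) by auto
  have "n \<noteq> 0" using v v0 by auto
  then obtain vs where "basis_completion v = v # vs"
    using b(6,7) by (cases "basis_completion v") auto
  then have ws0: "ws ! 0 = v"
    using gram_schmidt_hd[OF v, of vs] ws(3) \<open>n \<noteq> 0\<close> unfolding ws_def
    by (metis hd_conv_nth length_0_conv)
  have ws_carrier: "ws ! i \<in> carrier_vec n" if "i < n" for i
    using ws that by auto
  have orth: "scalar_prod (ws ! i) (ws ! j) = 0 \<longleftrightarrow> i \<noteq> j" if "i < n" "j < n" for i j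
    using corthogonalD[OF ws(2)] ws(3) that by simp
  have pos: "scalar_prod (ws ! i) (ws ! i) > 0" if "i < n" for i
    using orth[OF that that] conjugate_square_ge_0_vec[of "ws ! i"] by simp
  define us where "us = map (\<lambda>w. (1 / sqrt (scalar_prod w w)) \<cdot>\<^sub>v w) ws"
  have us: "set us \<subseteq> carrier_vec n" "length us = n"
    using ws unfolding us_def by auto
  have us_orthonormal: "scalar_prod (us ! i) (us ! j) = (if i = j then 1 else 0)"
    if "i < n" "j < n" for i j
    using that ws ws_carrier[OF that(1)] ws_carrier[OF that(2)] orth[OF that] pos[OF that(1)]
    by (auto simp: us_def real_sqrt_mult[symmetric])
  define U where "U = mat_of_cols n us"
  have U: "U \<in> carrier_mat n n"
    unfolding U_def using us by auto
  have col_U: "col U j = us ! j" if "j < n" for j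
    unfolding U_def using us that by (intro col_mat_of_cols) auto
  have "U\<^sup>T * U = 1\<^sub>m n"
    by (rule eq_matI) (use U col_U us_orthonormal in auto)
  moreover have "col U 0 = (1 / sqrt (scalar_prod v v)) \<cdot>\<^sub>v v"
    using col_U[of 0] ws0 ws(3) \<open>n \<noteq> 0\<close> unfolding us_def by auto
  ultimately show thesis
    using that U by blast
qed

lemma symmetric_mat_block_split:
  fixes B :: "'a::comm_ring_1 mat"
  assumes B: "B \<in> carrier_mat (Suc m) (Suc m)" and sym: "B\<^sup>T = B"
    and col0: "col B 0 = e \<cdot>\<^sub>v unit_vec (Suc m) 0"
  shows "B = four_block_mat (mat 1 1 (\<lambda>_. e)) (0\<^sub>m 1 m) (0\<^sub>m m 1)
    (mat m m (\<lambda>(i, j). B $$ (Suc i, Suc j)))"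
proof -
  have first_col: "B $$ (i, 0) = (if i = 0 then e else 0)" if "i < Suc m" for i
    using arg_cong[OF col0, of "\<lambda>w. w $ i"] B that by auto
  have first_row: "B $$ (0, j) = (if j = 0 then e else 0)" if "j < Suc m" for j
    using first_col[OF that] arg_cong[OF sym, of "\<lambda>M. M $$ (j, 0)"] B that by auto
  show ?thesis
    by (rule eq_matI) (use B first_col first_row in \<open>auto simp: less_Suc_eq_0_disj\<close>)
qed

lemma mat_diag_Cons:
  "mat_diag (Suc m) (\<lambda>i. (e # es) ! i)
    = four_block_mat (mat 1 1 (\<lambda>_. e)) (0\<^sub>m 1 m) (0\<^sub>m m 1) (mat_diag m (\<lambda>i. es ! i))"
  by (rule eq_matI) (auto simp: mat_diag_def less_Suc_eq_0_disj)

lemma four_block_diagonalization: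
  fixes U B :: "'a::comm_ring_1 mat"
  assumes U: "U \<in> carrier_mat m m" and B: "B \<in> carrier_mat m m"
    and orth: "U\<^sup>T * U = 1\<^sub>m m" and diag: "B * U = U * mat_diag m (\<lambda>i. es ! i)"
  defines "U' \<equiv> four_block_mat (1\<^sub>m 1) (0\<^sub>m 1 m) (0\<^sub>m m 1) U"
  shows "U' \<in> carrier_mat (Suc m) (Suc m)" "U'\<^sup>T * U' = 1\<^sub>m (Suc m)"
    "four_block_mat (mat 1 1 (\<lambda>_. e)) (0\<^sub>m 1 m) (0\<^sub>m m 1) B * U'
      = U' * mat_diag (Suc m) (\<lambda>i. (e # es) ! i)"
proof -
  show "U' \<in> carrier_mat (Suc m) (Suc m)"
    unfolding U'_def using U by auto
  have "U'\<^sup>T = four_block_mat (1\<^sub>m 1) (0\<^sub>m 1 m) (0\<^sub>m m 1) U\<^sup>T"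
    unfolding U'_def
    using transpose_four_block_mat[OF one_carrier_mat zero_carrier_mat zero_carrier_mat U] by simp
  then have "U'\<^sup>T * U' = four_block_mat (1\<^sub>m 1) (0\<^sub>m 1 m) (0\<^sub>m m 1) (U\<^sup>T * U)"
    unfolding U'_def using U
    by (simp add: mult_four_block_mat[OF one_carrier_mat zero_carrier_mat zero_carrier_mat
          transpose_carrier_mat[THEN iffD2, OF U] one_carrier_mat zero_carrier_mat zero_carrier_mat U])
  then show "U'\<^sup>T * U' = 1\<^sub>m (Suc m)"
    using orth four_block_one_mat[of 1 m] by simp
  show "four_block_mat (mat 1 1 (\<lambda>_. e)) (0\<^sub>m 1 m) (0\<^sub>m m 1) B * U'
      = U' * mat_diag (Suc m) (\<lambda>i. (e # es) ! i)"
    unfolding U'_def mat_diag_Cons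
    using U B diag
    by (simp add: left_mult_zero_mat[OF mat_diag_dim] left_add_zero_mat[OF zero_carrier_mat]
        mult_four_block_mat[OF _ zero_carrier_mat zero_carrier_mat B
          one_carrier_mat zero_carrier_mat zero_carrier_mat U]
        mult_four_block_mat[OF one_carrier_mat zero_carrier_mat zero_carrier_mat U
          _ zero_carrier_mat zero_carrier_mat mat_diag_dim])
qed

lemma transpose_conj_symmetric:
  fixes A U :: "'a::comm_semiring_0 mat"
  assumes A: "A \<in> carrier_mat n n" and U: "U \<in> carrier_mat n n" and sym: "A\<^sup>T = A"
  shows "(U\<^sup>T * A * U)\<^sup>T = U\<^sup>T * A * U"
proof -
  have "(U\<^sup>T * A * U)\<^sup>T = (A * U)\<^sup>T * U"
    using A U by (simp add: transpose_mult[of "U\<^sup>T" n n "A * U" n])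
  also have "\<dots> = U\<^sup>T * A * U"
    using A U sym by (simp add: transpose_mult[of A n n U n])
  finally show ?thesis .
qed

lemma conj_first_col_eigenvector:
  fixes A U :: "'a::field mat"
  assumes A: "A \<in> carrier_mat n n" and U: "U \<in> carrier_mat n n" "U\<^sup>T * U = 1\<^sub>m n"
    and col0: "col U 0 = r \<cdot>\<^sub>v v" and v: "v \<in> carrier_vec n" "A *\<^sub>v v = e \<cdot>\<^sub>v v" and n: "0 < n"
  shows "col (U\<^sup>T * A * U) 0 = e \<cdot>\<^sub>v unit_vec n 0"
proof -
  have "col (U\<^sup>T * A * U) 0 = U\<^sup>T *\<^sub>v (A *\<^sub>v (r \<cdot>\<^sub>v v))"
    using A U n col0 col_mult2[of "U\<^sup>T" n n "A * U" n 0] col_mult2[of A n n U n 0] by simp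
  also have "\<dots> = e \<cdot>\<^sub>v (U\<^sup>T *\<^sub>v col U 0)"
    using A U v col0 by (simp add: mult_mat_vec[of _ n n] smult_smult_assoc mult.commute)
  also have "U\<^sup>T *\<^sub>v col U 0 = unit_vec n 0"
    using U n col_mult2[of "U\<^sup>T" n n U n 0] by simp
  finally show ?thesis .
qed

lemma symmetric_mat_deflation:
  fixes A :: "real mat"
  assumes A: "A \<in> carrier_mat (Suc m) (Suc m)" and sym: "A\<^sup>T = A" and e: "eigenvalue A e"
  obtains U B where "U \<in> carrier_mat (Suc m) (Suc m)" "U\<^sup>T * U = 1\<^sub>m (Suc m)"
    "B \<in> carrier_mat m m" "B\<^sup>T = B"
    "A * U = U * four_block_mat (mat 1 1 (\<lambda>_. e)) (0\<^sub>m 1 m) (0\<^sub>m m 1) B"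
proof -
  let ?n = "Suc m"
  obtain v where v: "v \<in> carrier_vec ?n" "v \<noteq> 0\<^sub>v ?n" "A *\<^sub>v v = e \<cdot>\<^sub>v v"
    using e A unfolding eigenvalue_def eigenvector_def by auto
  obtain U r where U: "U \<in> carrier_mat ?n ?n" "U\<^sup>T * U = 1\<^sub>m ?n" "col U 0 = r \<cdot>\<^sub>v v"
    using orthogonal_mat_with_first_col[OF v(1,2)] by blast
  define C where "C = U\<^sup>T * A * U"
  define B where "B = mat m m (\<lambda>(i, j). C $$ (Suc i, Suc j))"
  have C: "C \<in> carrier_mat ?n ?n" and C_sym: "C\<^sup>T = C"
    using A U sym transpose_conj_symmetric[OF A U(1) sym] by (simp_all add: C_def)
  have C_blocks: "C = four_block_mat (mat 1 1 (\<lambda>_. e)) (0\<^sub>m 1 m) (0\<^sub>m m 1) B"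
    using symmetric_mat_block_split[OF C C_sym] conj_first_col_eigenvector[OF A U v(1,3)]
    unfolding B_def C_def by simp
  have B: "B \<in> carrier_mat m m"
    by (simp add: B_def)
  have B_sym: "B\<^sup>T = B"
  proof (rule eq_matI)
    fix i j assume "i < dim_row B" "j < dim_col B"
    then show "B\<^sup>T $$ (i, j) = B $$ (i, j)"
      using arg_cong[OF C_sym, of "\<lambda>M. M $$ (Suc i, Suc j)"] C unfolding B_def by auto
  qed (use B in auto)
  have "U * U\<^sup>T = 1\<^sub>m ?n"
    using mat_mult_left_right_inverse[OF _ U(1,2)] U(1) by auto
  moreover have "U * C = (U * U\<^sup>T) * (A * U)"
    using A U by (simp add: C_def assoc_mult_mat[of U ?n ?n "U\<^sup>T" ?n "A * U" ?n])
  ultimately have "A * U = U * C"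
    using A U by simp
  then show thesis
    by (rule that[OF U(1,2) B B_sym, unfolded C_blocks[symmetric]])
qed

lemma orthogonal_mat_mult:
  fixes U V :: "'a::comm_ring_1 mat"
  assumes U: "U \<in> carrier_mat n n" "U\<^sup>T * U = 1\<^sub>m n" and V: "V \<in> carrier_mat n n" "V\<^sup>T * V = 1\<^sub>m n"
  shows "(U * V)\<^sup>T * (U * V) = 1\<^sub>m n"
proof -
  have "(U * V)\<^sup>T * (U * V) = V\<^sup>T * ((U\<^sup>T * U) * V)"
    using U(1) V(1) by (simp add: transpose_mult[OF U(1) V(1)] assoc_mult_mat[of _ n n _ n _ n])
  also have "\<dots> = 1\<^sub>m n"
    using U(2) V by simp
  finally show ?thesis .
qed

lemma char_poly_orthogonal_conj:
  fixes A B U :: "'a::comm_ring_1 mat"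
  assumes A: "A \<in> carrier_mat n n" and B: "B \<in> carrier_mat n n"
    and U: "U \<in> carrier_mat n n" "U\<^sup>T * U = 1\<^sub>m n" "U * U\<^sup>T = 1\<^sub>m n" and AU: "A * U = U * B"
  shows "char_poly A = char_poly B"
proof (rule char_poly_similar)
  have "A = A * (U * U\<^sup>T)"
    using A U(3) by simp
  also have "\<dots> = U * B * U\<^sup>T"
    unfolding AU[symmetric] using A U(1) by (simp add: assoc_mult_mat[of A n n U n "U\<^sup>T" n])
  finally show "similar_mat A B"
    unfolding similar_mat_def similar_mat_wit_def Let_def
    using A B U by (intro exI[of _ U] exI[of _ "U\<^sup>T"]) auto
qed

lemma char_poly_deflation:
  fixes A B U :: "'a::field mat"
  assumes A: "A \<in> carrier_mat (Suc m) (Suc m)" and U: "U \<in> carrier_mat (Suc m) (Suc m)"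
    "U\<^sup>T * U = 1\<^sub>m (Suc m)" and B: "B \<in> carrier_mat m m"
    and AU: "A * U = U * four_block_mat (mat 1 1 (\<lambda>_. e)) (0\<^sub>m 1 m) (0\<^sub>m m 1) B"
  shows "char_poly A = [:-e, 1:] * char_poly B"
proof -
  have E: "four_block_mat (mat 1 1 (\<lambda>_. e)) (0\<^sub>m 1 m) (0\<^sub>m m 1) B \<in> carrier_mat (Suc m) (Suc m)"
    using four_block_carrier_mat[OF mat_carrier[of 1 1 "\<lambda>_. e"] B] by simp
  have "char_poly A = char_poly (four_block_mat (mat 1 1 (\<lambda>_. e)) (0\<^sub>m 1 m) (0\<^sub>m m 1) B)"
    using char_poly_orthogonal_conj[OF A E U _ AU] mat_mult_left_right_inverse[OF _ U] U(1) by auto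
  also have "\<dots> = [:-e, 1:] * char_poly B"
    using char_poly_four_block_zeros_col[OF mat_carrier zero_carrier_mat B]
    by (simp add: char_poly_defs det_def sign_def)
  finally show ?thesis .
qed

theorem symmetric_mat_orthogonal_diagonalization:
  fixes A :: "real mat"
  assumes "A \<in> carrier_mat n n" "A\<^sup>T = A" "char_poly A = (\<Prod>e\<leftarrow>es. [:-e, 1:])"
  shows "\<exists>U \<in> carrier_mat n n. U\<^sup>T * U = 1\<^sub>m n \<and> A * U = U * mat_diag n (\<lambda>i. es ! i)"
  using assms
proof (induction es arbitrary: n A)
  case Nil
  then have "n = 0"
    using degree_monic_char_poly[of A n] by auto
  with Nil show ?case
    by (intro bexI[of _ "1\<^sub>m 0"]) (auto simp: mat_diag_def)
next
  case (Cons e es n A)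
  then have A: "A \<in> carrier_mat n n" and "eigenvalue A e"
    using eigenvalue_root_char_poly[of A n e] by auto
  have "n = Suc (length es)"
    using Cons.prems(3) degree_monic_char_poly[OF A] degree_linear_factors[of uminus "e # es"] by simp
  then obtain m where n: "n = Suc m"
    by blast
  obtain U1 B where U1: "U1 \<in> carrier_mat n n" "U1\<^sup>T * U1 = 1\<^sub>m n" and B: "B \<in> carrier_mat m m" "B\<^sup>T = B"
    and AU1: "A * U1 = U1 * four_block_mat (mat 1 1 (\<lambda>_. e)) (0\<^sub>m 1 m) (0\<^sub>m m 1) B"
    using symmetric_mat_deflation[of A m e] A Cons.prems(2) \<open>eigenvalue A e\<close> unfolding n by blast
  have "[:-e, 1:] * char_poly B = [:-e, 1:] * (\<Prod>e\<leftarrow>es. [:-e, 1:])"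
    using char_poly_deflation[OF A[unfolded n] U1[unfolded n] B(1) AU1] Cons.prems(3) by simp
  then have "char_poly B = (\<Prod>e\<leftarrow>es. [:-e, 1:])"
    by (subst (asm) mult_left_cancel) auto
  then obtain U3 where U3: "U3 \<in> carrier_mat m m" "U3\<^sup>T * U3 = 1\<^sub>m m"
      "B * U3 = U3 * mat_diag m (\<lambda>i. es ! i)"
    using Cons.IH[OF B] by blast
  define U2 where "U2 = four_block_mat (1\<^sub>m 1) (0\<^sub>m 1 m) (0\<^sub>m m 1) U3"
  note U2 = four_block_diagonalization[OF U3(1) B(1) U3(2,3), folded U2_def n]
  let ?E = "four_block_mat (mat 1 1 (\<lambda>_. e)) (0\<^sub>m 1 m) (0\<^sub>m m 1) B"
  have E: "?E \<in> carrier_mat n n"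
    using four_block_carrier_mat[OF mat_carrier[of 1 1 "\<lambda>_. e"] B(1)] unfolding n by simp
  have "A * (U1 * U2) = (A * U1) * U2"
    using A U1(1) U2(1) by simp
  also have "\<dots> = U1 * (?E * U2)"
    unfolding AU1 using U1(1) U2(1) E by simp
  also have "\<dots> = (U1 * U2) * mat_diag n (\<lambda>i. (e # es) ! i)"
    unfolding U2(3) by (rule assoc_mult_mat[symmetric, OF U1(1) U2(1) mat_diag_dim])
  finally show ?case
    using U1 U2(1,2) orthogonal_mat_mult[OF U1 U2(1,2)] by (intro bexI[of _ "U1 * U2"]) auto
qed

section \<open>Eigenvalue bounds from quadratic forms\<close>

lemma exists_nontrivial_linear_relation:
  fixes W :: "'i \<Rightarrow> 'b::euclidean_space"
  assumes I: "finite I" "DIM('b) < card I"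
  obtains \<alpha> where "\<exists>i\<in>I. \<alpha> i \<noteq> 0" "(\<Sum>i\<in>I. \<alpha> i *\<^sub>R W i) = 0"
proof (cases "inj_on W I")
  case False
  then obtain i j where ij: "i \<in> I" "j \<in> I" "i \<noteq> j" "W i = W j"
    unfolding inj_on_def by auto
  define \<alpha> where "\<alpha> t = (if t = i then 1 else if t = j then -1 else 0 :: real)" for t
  have "(\<Sum>t\<in>I. \<alpha> t *\<^sub>R W t)
      = (\<Sum>t\<in>I. if t = i then W t else 0) - (\<Sum>t\<in>I. if t = j then W t else 0)"
    unfolding sum_subtractf[symmetric] by (rule sum.cong) (use ij(3) in \<open>auto simp: \<alpha>_def\<close>)
  also have "\<dots> = 0"
    using I(1) ij by simp
  finally show thesis
    by (rule that[rotated]) (use ij in \<open>auto simp: \<alpha>_def\<close>)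
next
  case True
  then have "card (W ` I) = card I"
    by (rule card_image)
  then have "dependent (W ` I)"
    using I dependent_biggerset[of "W ` I"] by auto
  then obtain u where u: "\<exists>w\<in>W ` I. u w \<noteq> 0" "(\<Sum>w\<in>W ` I. u w *\<^sub>R w) = 0"
    using dependent_finite[of "W ` I"] I(1) by auto
  then show thesis
    using that[of "u \<circ> W"] sum.reindex[OF True, of "\<lambda>w. u w *\<^sub>R w"] by auto
qed

lemma mat_diag_mult_vec:
  assumes "a \<in> carrier_vec n"
  shows "mat_diag n \<mu> *\<^sub>v a = vec n (\<lambda>i. \<mu> i * a $ i)"
proof (rule eq_vecI)
  fix i assume "i < dim_vec (vec n (\<lambda>i. \<mu> i * a $ i))"
  then have i: "i < n" by simp
  have "(mat_diag n \<mu> *\<^sub>v a) $ i = (\<Sum>j\<in>{0..<n}. (if i = j then \<mu> j else 0) * a $ j)"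
    using i assms by (simp add: mat_diag_def scalar_prod_def)
  also have "\<dots> = (\<Sum>j\<in>{0..<n}. if j = i then \<mu> i * a $ i else 0)"
    by (rule sum.cong) auto
  finally show "(mat_diag n \<mu> *\<^sub>v a) $ i = vec n (\<lambda>i. \<mu> i * a $ i) $ i"
    using i by simp
qed (simp add: mat_diag_def)

lemma quadratic_form_orthogonal_diagonalization:
  fixes A U :: "real mat"
  assumes A: "A \<in> carrier_mat n n" and U: "U \<in> carrier_mat n n"
    and orth: "U\<^sup>T * U = 1\<^sub>m n" and diag: "A * U = U * mat_diag n \<mu>"
    and a: "a \<in> carrier_vec n"
  shows "scalar_prod (U *\<^sub>v a) (A *\<^sub>v (U *\<^sub>v a)) - c * scalar_prod (U *\<^sub>v a) (U *\<^sub>v a)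
    = (\<Sum>i<n. (\<mu> i - c) * (a $ i)^2)"
proof -
  have recover: "U\<^sup>T *\<^sub>v (U *\<^sub>v a) = a"
    using U a orth by (simp flip: assoc_mult_mat_vec[of "U\<^sup>T" n n U n])
  have "A *\<^sub>v (U *\<^sub>v a) = U *\<^sub>v (mat_diag n \<mu> *\<^sub>v a)"
    using A U a by (simp flip: diag assoc_mult_mat_vec[of U n n "mat_diag n \<mu>" n a])
  then have "scalar_prod (U *\<^sub>v a) (A *\<^sub>v (U *\<^sub>v a)) = scalar_prod a (mat_diag n \<mu> *\<^sub>v a)"
    using transpose_vec_mult_scalar[OF U mult_mat_vec_carrier[OF mat_diag_dim a]
        mult_mat_vec_carrier[OF U a]] recover
    by simp
  also have "\<dots> = (\<Sum>i<n. \<mu> i * (a $ i)^2)"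
    using a by (simp add: mat_diag_mult_vec scalar_prod_def lessThan_atLeast0 power2_eq_square mult_ac)
  finally have quad: "scalar_prod (U *\<^sub>v a) (A *\<^sub>v (U *\<^sub>v a)) = (\<Sum>i<n. \<mu> i * (a $ i)^2)" .
  have "scalar_prod (U *\<^sub>v a) (U *\<^sub>v a) = scalar_prod a a"
    using transpose_vec_mult_scalar[OF U a mult_mat_vec_carrier[OF U a]] recover by simp
  also have "\<dots> = (\<Sum>i<n. (a $ i)^2)"
    using a by (simp add: scalar_prod_def lessThan_atLeast0 power2_eq_square)
  finally show ?thesis
    unfolding quad by (simp add: left_diff_distrib sum_subtractf sum_distrib_left)
qed

text \<open>A subspace of codimension at most \<open>DIM('b)\<close> is given as the kernel of the linear map
  \<open>x \<mapsto> \<Sum>\<^sub>k x\<^sub>k e\<^sub>k\<close> into \<open>'b\<close>.\<close>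

lemma exists_eigenvector_combination_in_kernel:
  fixes A U :: "real mat" and e :: "nat \<Rightarrow> 'b::euclidean_space"
  assumes A: "A \<in> carrier_mat n n" and U: "U \<in> carrier_mat n n"
    and orth: "U\<^sup>T * U = 1\<^sub>m n" and diag: "A * U = U * mat_diag n \<mu>"
    and I: "I \<subseteq> {..<n}" "DIM('b) < card I"
  obtains x \<alpha> where "x \<in> carrier_vec n" "(\<Sum>k<n. x $ k *\<^sub>R e k) = 0" "\<exists>i\<in>I. \<alpha> i \<noteq> 0"
    "scalar_prod x (A *\<^sub>v x) - c * scalar_prod x x = (\<Sum>i\<in>I. (\<mu> i - c) * (\<alpha> i)^2)"
proof -
  have fin: "finite I"
    using I(1) by (rule finite_subset) simp
  obtain \<alpha> where \<alpha>: "\<exists>i\<in>I. \<alpha> i \<noteq> 0" "(\<Sum>i\<in>I. \<alpha> i *\<^sub>R (\<Sum>k<n. U $$ (k, i) *\<^sub>R e k)) = 0"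
    using exists_nontrivial_linear_relation[OF fin I(2), where W = "\<lambda>i. \<Sum>k<n. U $$ (k, i) *\<^sub>R e k"]
    by blast
  define a where "a = vec n (\<lambda>i. if i \<in> I then \<alpha> i else 0)"
  have a: "a \<in> carrier_vec n"
    by (simp add: a_def)
  have restrict: "(\<Sum>i<n. f i * a $ i) = (\<Sum>i\<in>I. f i * \<alpha> i)" for f :: "nat \<Rightarrow> real"
  proof -
    have "(\<Sum>i<n. f i * a $ i) = (\<Sum>i\<in>{..<n} \<inter> I. f i * \<alpha> i)"
      unfolding sum.inter_restrict[OF finite_lessThan] by (rule sum.cong) (auto simp: a_def)
    then show ?thesis
      using I(1) by (simp add: Int_absorb1)
  qed
  have "(\<Sum>k<n. (U *\<^sub>v a) $ k *\<^sub>R e k) = (\<Sum>k<n. (\<Sum>i\<in>I. U $$ (k, i) * \<alpha> i) *\<^sub>R e k)"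
    using U a by (intro sum.cong refl) (simp add: scalar_prod_def atLeast0LessThan restrict)
  also have "\<dots> = (\<Sum>k<n. \<Sum>i\<in>I. \<alpha> i *\<^sub>R U $$ (k, i) *\<^sub>R e k)"
    by (simp add: scaleR_sum_left mult.commute)
  also have "\<dots> = (\<Sum>i\<in>I. \<alpha> i *\<^sub>R (\<Sum>k<n. U $$ (k, i) *\<^sub>R e k))"
    unfolding scaleR_sum_right by (rule sum.swap)
  finally have kernel: "(\<Sum>k<n. (U *\<^sub>v a) $ k *\<^sub>R e k) = 0"
    using \<alpha>(2) by simp
  have "scalar_prod (U *\<^sub>v a) (A *\<^sub>v (U *\<^sub>v a)) - c * scalar_prod (U *\<^sub>v a) (U *\<^sub>v a)
      = (\<Sum>i\<in>I. (\<mu> i - c) * (\<alpha> i)^2)"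
  proof -
    have "(\<Sum>i<n. (\<mu> i - c) * (a $ i)^2) = (\<Sum>i\<in>I. ((\<mu> i - c) * a $ i) * \<alpha> i)"
      using restrict[of "\<lambda>i. (\<mu> i - c) * a $ i"] by (simp add: power2_eq_square mult.assoc)
    also have "\<dots> = (\<Sum>i\<in>I. (\<mu> i - c) * (\<alpha> i)^2)"
      using I(1) by (intro sum.cong refl) (auto simp: a_def power2_eq_square)
    finally show ?thesis
      unfolding quadratic_form_orthogonal_diagonalization[OF A U orth diag a] .
  qed
  then show thesis
    using that[OF mult_mat_vec_carrier[OF U a] kernel \<alpha>(1)] by blast
qed

lemma exists_eigenvalue_le_if_quadratic_form_le:
  fixes A U :: "real mat" and e :: "nat \<Rightarrow> 'b::euclidean_space"
  assumes A: "A \<in> carrier_mat n n" and U: "U \<in> carrier_mat n n"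
    and orth: "U\<^sup>T * U = 1\<^sub>m n" and diag: "A * U = U * mat_diag n \<mu>"
    and I: "I \<subseteq> {..<n}" "DIM('b) < card I"
    and form: "\<And>x. x \<in> carrier_vec n \<Longrightarrow> (\<Sum>k<n. x $ k *\<^sub>R e k) = 0 \<Longrightarrow>
      scalar_prod x (A *\<^sub>v x) \<le> c * scalar_prod x x"
  shows "\<exists>i\<in>I. \<mu> i \<le> c"
proof (rule ccontr)
  assume "\<not> (\<exists>i\<in>I. \<mu> i \<le> c)"
  then have above: "c < \<mu> i" if "i \<in> I" for i
    using that by auto
  obtain x \<alpha> where x: "x \<in> carrier_vec n" "(\<Sum>k<n. x $ k *\<^sub>R e k) = 0"
    and \<alpha>: "\<exists>i\<in>I. \<alpha> i \<noteq> 0"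
    and eq: "scalar_prod x (A *\<^sub>v x) - c * scalar_prod x x = (\<Sum>i\<in>I. (\<mu> i - c) * (\<alpha> i)^2)"
    using exists_eigenvector_combination_in_kernel[OF A U orth diag I] by blast
  from \<alpha> obtain i0 where "i0 \<in> I" "\<alpha> i0 \<noteq> 0" ..
  moreover have "0 \<le> (\<mu> i - c) * (\<alpha> i)^2" if "i \<in> I" for i
    using above[OF that] by simp
  ultimately have "0 < (\<Sum>i\<in>I. (\<mu> i - c) * (\<alpha> i)^2)"
    using finite_subset[OF I(1) finite_lessThan] above by (intro sum_pos2[of I i0]) auto
  then show False
    using eq form[OF x] by linarith
qed

lemma exists_eigenvalue_ge_if_quadratic_form_ge:
  fixes A U :: "real mat" and e :: "nat \<Rightarrow> 'b::euclidean_space"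
  assumes A: "A \<in> carrier_mat n n" and U: "U \<in> carrier_mat n n"
    and orth: "U\<^sup>T * U = 1\<^sub>m n" and diag: "A * U = U * mat_diag n \<mu>"
    and I: "I \<subseteq> {..<n}" "DIM('b) < card I"
    and form: "\<And>x. x \<in> carrier_vec n \<Longrightarrow> (\<Sum>k<n. x $ k *\<^sub>R e k) = 0 \<Longrightarrow>
      c * scalar_prod x x \<le> scalar_prod x (A *\<^sub>v x)"
  shows "\<exists>i\<in>I. c \<le> \<mu> i"
proof (rule ccontr)
  assume "\<not> (\<exists>i\<in>I. c \<le> \<mu> i)"
  then have below: "\<mu> i < c" if "i \<in> I" for i
    using that by auto
  obtain x \<alpha> where x: "x \<in> carrier_vec n" "(\<Sum>k<n. x $ k *\<^sub>R e k) = 0"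
    and \<alpha>: "\<exists>i\<in>I. \<alpha> i \<noteq> 0"
    and eq: "scalar_prod x (A *\<^sub>v x) - c * scalar_prod x x = (\<Sum>i\<in>I. (\<mu> i - c) * (\<alpha> i)^2)"
    using exists_eigenvector_combination_in_kernel[OF A U orth diag I] by blast
  from \<alpha> obtain i0 where "i0 \<in> I" "\<alpha> i0 \<noteq> 0" ..
  moreover have "0 \<le> (c - \<mu> i) * (\<alpha> i)^2" if "i \<in> I" for i
    using below[OF that] by simp
  ultimately have "0 < (\<Sum>i\<in>I. (c - \<mu> i) * (\<alpha> i)^2)"
    using finite_subset[OF I(1) finite_lessThan] below by (intro sum_pos2[of I i0]) auto
  moreover have "(\<Sum>i\<in>I. (\<mu> i - c) * (\<alpha> i)^2) = - (\<Sum>i\<in>I. (c - \<mu> i) * (\<alpha> i)^2)"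
    unfolding sum_negf[symmetric] by (rule sum.cong) (simp_all add: algebra_simps)
  ultimately show False
    using eq form[OF x] by linarith
qed

lemma eigvals_desc_length:
  assumes "A \<in> carrier_mat n n" "eigvals_desc A es"
  shows "length es = n"
  using assms degree_monic_char_poly[OF assms(1)] degree_linear_factors[of uminus es]
  by (simp add: eigvals_desc_def)

lemma eigvals_desc_antimono:
  assumes "eigvals_desc A es" "i \<le> j" "j < length es"
  shows "es ! j \<le> es ! i"
  using assms sorted_wrt_nth_less[of "(\<ge>)" es i j] by (cases "i = j") (auto simp: eigvals_desc_def)

lemma eigvals_desc_le_if_quadratic_form_le:
  fixes A :: "real mat" and e :: "nat \<Rightarrow> 'b::euclidean_space"
  assumes A: "A \<in> carrier_mat n n" "A\<^sup>T = A" and es: "eigvals_desc A es"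
    and k: "DIM('b) \<le> k" "k < n"
    and form: "\<And>x. x \<in> carrier_vec n \<Longrightarrow> (\<Sum>l<n. x $ l *\<^sub>R e l) = 0 \<Longrightarrow>
      scalar_prod x (A *\<^sub>v x) \<le> c * scalar_prod x x"
  shows "es ! k \<le> c"
proof -
  obtain U where U: "U \<in> carrier_mat n n" "U\<^sup>T * U = 1\<^sub>m n" "A * U = U * mat_diag n (\<lambda>i. es ! i)"
    using symmetric_mat_orthogonal_diagonalization[OF A] es by (auto simp: eigvals_desc_def)
  have "\<exists>i\<in>{..k}. es ! i \<le> c"
    by (rule exists_eigenvalue_le_if_quadratic_form_le[OF A(1) U _ _ form]) (use k in auto)
  then obtain i where "i \<le> k" "es ! i \<le> c"
    by blast
  then show ?thesis
    using eigvals_desc_antimono[OF es, of i k] eigvals_desc_length[OF A(1) es] k(2) by linarith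
qed

lemma eigvals_desc_ge_if_quadratic_form_ge:
  fixes A :: "real mat" and e :: "nat \<Rightarrow> 'b::euclidean_space"
  assumes A: "A \<in> carrier_mat n n" "A\<^sup>T = A" and es: "eigvals_desc A es"
    and k: "DIM('b) \<le> k" "k < n"
    and form: "\<And>x. x \<in> carrier_vec n \<Longrightarrow> (\<Sum>l<n. x $ l *\<^sub>R e l) = 0 \<Longrightarrow>
      c * scalar_prod x x \<le> scalar_prod x (A *\<^sub>v x)"
  shows "c \<le> es ! (n - 1 - k)"
proof -
  obtain U where U: "U \<in> carrier_mat n n" "U\<^sup>T * U = 1\<^sub>m n" "A * U = U * mat_diag n (\<lambda>i. es ! i)"
    using symmetric_mat_orthogonal_diagonalization[OF A] es by (auto simp: eigvals_desc_def)
  have "\<exists>i\<in>{n - 1 - k..<n}. c \<le> es ! i"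
    by (rule exists_eigenvalue_ge_if_quadratic_form_ge[OF A(1) U _ _ form]) (use k in auto)
  then obtain i where "n - 1 - k \<le> i" "i < n" "c \<le> es ! i"
    by auto
  then show ?thesis
    using eigvals_desc_antimono[OF es, of "n - 1 - k" i] eigvals_desc_length[OF A(1) es] by linarith
qed

section \<open>The quadratic form of \<open>S\<close>\<close>

lemma quadratic_form_eq_double_sum:
  fixes B :: "'a::comm_semiring_0 mat"
  assumes "B \<in> carrier_mat n n" "x \<in> carrier_vec n"
  shows "scalar_prod x (B *\<^sub>v x) = (\<Sum>k<n. \<Sum>l<n. x $ k * B $$ (k, l) * x $ l)"
  using assms
  by (simp add: scalar_prod_def sum_distrib_left mult.assoc lessThan_atLeast0)

lemma double_sum_product:
  fixes c :: "'a::comm_semiring_0"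
  shows "(\<Sum>k\<in>A. \<Sum>l\<in>B. c * (f k * g l)) = c * (sum f A * sum g B)"
  unfolding sum_product by (simp add: sum_distrib_left)

lemma Smat_carrier: "Smat \<delta> P n h \<in> carrier_mat (n - 1) (n - 1)"
  unfolding Smat_def Mmat_def Dmat_def
  by (intro smult_carrier_mat add_carrier_mat minus_carrier_mat mat_carrier one_carrier_mat)

lemma Smat_symmetric: "(Smat \<delta> P n h)\<^sup>T = Smat \<delta> P n h"
  by (rule eq_matI) (auto simp: Smat_def Mmat_def Dmat_def cdist_def dist_commute)

lemma Mmat_entry:
  fixes P :: "nat \<Rightarrow> 'a::real_inner"
  assumes "k < n - 1" "l < n - 1"
  shows "Mmat P n $$ (k, l) = 2 * inner (P (k + 1) - P n) (P (l + 1) - P n)"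
  using assms
  by (simp add: Mmat_def cdist_def dist_norm power2_norm_eq_inner inner_commute algebra_simps)

lemma Dmat_entry:
  assumes "k < n - 1" "l < n - 1"
  shows "Dmat \<delta> n h $$ (k, l) = (\<delta>^2 - 3) * (of_bool (k < h) * of_bool (l < h))
    - (1 + \<delta>^2) * (of_bool (k < h) * of_bool (h \<le> l))
    - (1 + \<delta>^2) * (of_bool (h \<le> k) * of_bool (l < h))
    + (1 - 3 * \<delta>^2) * (of_bool (h \<le> k) * of_bool (h \<le> l))"
  using assms by (simp add: Dmat_def)

lemma Smat_entry:
  assumes "\<delta>^2 \<noteq> 1" "k < n - 1" "l < n - 1"
  shows "(\<delta>^2 - 1) * Smat \<delta> P n h $$ (k, l)
    = 2 * Mmat P n $$ (k, l) + Dmat \<delta> n h $$ (k, l) - (1 + \<delta>^2) * of_bool (k = l)"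
  using assms by (simp add: Smat_def Mmat_def Dmat_def)

lemma Mmat_quadratic_form:
  fixes P :: "nat \<Rightarrow> 'a::real_inner"
  assumes "x \<in> carrier_vec (n - 1)"
  shows "(\<Sum>k<n - 1. \<Sum>l<n - 1. x $ k * Mmat P n $$ (k, l) * x $ l)
    = 2 * (norm (\<Sum>k<n - 1. x $ k *\<^sub>R (P (k + 1) - P n)))^2"
  by (simp add: Mmat_entry power2_norm_eq_inner inner_sum_left inner_sum_right sum_distrib_left
      inner_commute mult_ac)

lemma Dmat_quadratic_form:
  fixes x :: "real vec" and n h :: nat
  defines "u \<equiv> \<Sum>k<n - 1. of_bool (k < h) * x $ k"
    and "v \<equiv> \<Sum>k<n - 1. of_bool (h \<le> k) * x $ k"
  shows "(\<Sum>k<n - 1. \<Sum>l<n - 1. x $ k * Dmat \<delta> n h $$ (k, l) * x $ l)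
    = (u + v) * ((1 - 3 * \<delta>^2) * v - (3 - \<delta>^2) * u)"
proof -
  have "(\<Sum>k<n - 1. \<Sum>l<n - 1. x $ k * Dmat \<delta> n h $$ (k, l) * x $ l)
    = (\<delta>^2 - 3) * (u * u) - (1 + \<delta>^2) * (u * v) - (1 + \<delta>^2) * (v * u) + (1 - 3 * \<delta>^2) * (v * v)"
    unfolding u_def v_def double_sum_product[symmetric]
    by (simp add: Dmat_entry sum.distrib sum_subtractf algebra_simps)
  then show ?thesis
    by (simp add: algebra_simps)
qed

lemma Smat_quadratic_form_expand:
  fixes x :: "real vec"
  assumes \<delta>: "\<delta>^2 \<noteq> 1" and x: "x \<in> carrier_vec (n - 1)"
  shows "(\<delta>^2 - 1) * scalar_prod x (Smat \<delta> P n h *\<^sub>v x)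
    = 2 * (\<Sum>k<n - 1. \<Sum>l<n - 1. x $ k * Mmat P n $$ (k, l) * x $ l)
      + (\<Sum>k<n - 1. \<Sum>l<n - 1. x $ k * Dmat \<delta> n h $$ (k, l) * x $ l) - (1 + \<delta>^2) * scalar_prod x x"
proof -
  let ?N = "n - 1"
  have "(\<Sum>l<?N. x $ k * of_bool (k = l) * x $ l) = x $ k * x $ k" if "k < ?N" for k
  proof -
    have "(\<Sum>l<?N. x $ k * of_bool (k = l) * x $ l) = (\<Sum>l<?N. if l = k then x $ k * x $ k else 0)"
      by (rule sum.cong) auto
    then show ?thesis
      using that by simp
  qed
  then have unit: "(\<Sum>k<?N. \<Sum>l<?N. x $ k * of_bool (k = l) * x $ l) = scalar_prod x x"
    using x by (simp add: scalar_prod_def lessThan_atLeast0)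
  have "(\<delta>^2 - 1) * scalar_prod x (Smat \<delta> P n h *\<^sub>v x)
      = (\<Sum>k<?N. \<Sum>l<?N. x $ k * ((\<delta>^2 - 1) * Smat \<delta> P n h $$ (k, l)) * x $ l)"
    unfolding quadratic_form_eq_double_sum[OF Smat_carrier x] sum_distrib_left
    by (intro sum.cong refl) (simp add: mult_ac)
  also have "\<dots> = (\<Sum>k<?N. \<Sum>l<?N. 2 * (x $ k * Mmat P n $$ (k, l) * x $ l)
      + x $ k * Dmat \<delta> n h $$ (k, l) * x $ l - (1 + \<delta>^2) * (x $ k * of_bool (k = l) * x $ l))"
  proof (intro sum.cong refl)
    fix k l assume "k \<in> {..<?N}" "l \<in> {..<?N}"
    then have entry: "(\<delta>^2 - 1) * Smat \<delta> P n h $$ (k, l)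
        = 2 * Mmat P n $$ (k, l) + Dmat \<delta> n h $$ (k, l) - (1 + \<delta>^2) * of_bool (k = l)"
      by (intro Smat_entry[OF \<delta>]) auto
    show "x $ k * ((\<delta>^2 - 1) * Smat \<delta> P n h $$ (k, l)) * x $ l
        = 2 * (x $ k * Mmat P n $$ (k, l) * x $ l) + x $ k * Dmat \<delta> n h $$ (k, l) * x $ l
          - (1 + \<delta>^2) * (x $ k * of_bool (k = l) * x $ l)"
      unfolding entry by (simp add: algebra_simps)
  qed
  also have "\<dots> = 2 * (\<Sum>k<?N. \<Sum>l<?N. x $ k * Mmat P n $$ (k, l) * x $ l)
      + (\<Sum>k<?N. \<Sum>l<?N. x $ k * Dmat \<delta> n h $$ (k, l) * x $ l) - (1 + \<delta>^2) * scalar_prod x x"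
    by (simp only: sum.distrib sum_subtractf sum_distrib_left[symmetric] unit)
  finally show ?thesis .
qed

lemma Smat_quadratic_form:
  fixes P :: "nat \<Rightarrow> 'a::real_inner" and x :: "real vec" and n h :: nat
  assumes \<delta>: "\<delta>^2 \<noteq> 1" and x: "x \<in> carrier_vec (n - 1)"
  defines "u \<equiv> \<Sum>k<n - 1. of_bool (k < h) * x $ k"
    and "v \<equiv> \<Sum>k<n - 1. of_bool (h \<le> k) * x $ k"
  shows "(\<delta>^2 - 1) * (scalar_prod x (Smat \<delta> P n h *\<^sub>v x)
      - (1 + \<delta>^2) / (1 - \<delta>^2) * scalar_prod x x)
    = 4 * (norm (\<Sum>k<n - 1. x $ k *\<^sub>R (P (k + 1) - P n)))^2
      + (u + v) * ((1 - 3 * \<delta>^2) * v - (3 - \<delta>^2) * u)"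
proof -
  have shift: "(\<delta>^2 - 1) * ((1 + \<delta>^2) / (1 - \<delta>^2)) = - (1 + \<delta>^2)"
    using \<delta> by (simp add: divide_simps) (simp add: algebra_simps)
  show ?thesis
    unfolding right_diff_distrib mult.assoc[symmetric] shift Smat_quadratic_form_expand[OF \<delta> x]
      Mmat_quadratic_form[OF x] Dmat_quadratic_form u_def v_def
    by (simp add: algebra_simps)
qed

lemma Smat_quadratic_form_le_on_kernel:
  fixes P :: "nat \<Rightarrow> 'a::real_inner" and x :: "real vec"
  assumes \<delta>: "\<delta> > 1" and x: "x \<in> carrier_vec (n - 1)"
    and kernel: "(\<Sum>k<n - 1. x $ k *\<^sub>R (P (k + 1) - P n, of_bool (k < h) :: real)) = 0"
  shows "scalar_prod x (Smat \<delta> P n h *\<^sub>v x) \<le> (1 + \<delta>^2) / (1 - \<delta>^2) * scalar_prod x x"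
proof -
  have \<delta>2: "\<delta>^2 > 1"
    using \<delta> by (simp add: one_less_power)
  have "(\<Sum>k<n - 1. x $ k *\<^sub>R (P (k + 1) - P n)) = 0" "(\<Sum>k<n - 1. of_bool (k < h) * x $ k) = 0"
    using arg_cong[OF kernel, of fst] arg_cong[OF kernel, of snd] by (simp_all add: fst_sum snd_sum mult.commute)
  then have "(\<delta>^2 - 1) * (scalar_prod x (Smat \<delta> P n h *\<^sub>v x)
      - (1 + \<delta>^2) / (1 - \<delta>^2) * scalar_prod x x)
    = (1 - 3 * \<delta>^2) * (\<Sum>k<n - 1. of_bool (h \<le> k) * x $ k)^2"
    using Smat_quadratic_form[of \<delta> x n P h] \<delta>2 x by (simp add: power2_eq_square)
  also have "\<dots> \<le> 0"
    using \<delta>2 by (intro mult_nonpos_nonneg) auto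
  finally show ?thesis
    using \<delta>2 by (simp add: mult_le_0_iff)
qed

lemma Smat_quadratic_form_ge_on_hyperplane:
  fixes P :: "nat \<Rightarrow> 'a::real_inner" and x :: "real vec"
  assumes \<delta>: "\<delta> > 1" and x: "x \<in> carrier_vec (n - 1)"
    and hyperplane: "(\<Sum>k<n - 1. x $ k) = 0"
  shows "(1 + \<delta>^2) / (1 - \<delta>^2) * scalar_prod x x \<le> scalar_prod x (Smat \<delta> P n h *\<^sub>v x)"
proof -
  have \<delta>2: "\<delta>^2 > 1"
    using \<delta> by (simp add: one_less_power)
  have "(\<Sum>k<n - 1. of_bool (k < h) * x $ k) + (\<Sum>k<n - 1. of_bool (h \<le> k) * x $ k)
      = (\<Sum>k<n - 1. x $ k)"
    unfolding sum.distrib[symmetric] by (rule sum.cong) auto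
  then have "(\<Sum>k<n - 1. of_bool (k < h) * x $ k) + (\<Sum>k<n - 1. of_bool (h \<le> k) * x $ k) = 0"
    using hyperplane by simp
  then have "(\<delta>^2 - 1) * (scalar_prod x (Smat \<delta> P n h *\<^sub>v x)
      - (1 + \<delta>^2) / (1 - \<delta>^2) * scalar_prod x x)
    = 4 * (norm (\<Sum>k<n - 1. x $ k *\<^sub>R (P (k + 1) - P n)))^2"
    using Smat_quadratic_form[of \<delta> x n P h] \<delta>2 x by simp
  then have "0 \<le> (\<delta>^2 - 1) * (scalar_prod x (Smat \<delta> P n h *\<^sub>v x)
      - (1 + \<delta>^2) / (1 - \<delta>^2) * scalar_prod x x)"
    by simp
  then show ?thesis
    using \<delta>2 by (simp add: zero_le_mult_iff)
qed

lemma Smat_eigenvalue_le: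
  fixes P :: "nat \<Rightarrow> 'a::euclidean_space"
  assumes \<delta>: "\<delta> > 1" and es: "eigvals_desc (Smat \<delta> P n h) es"
    and j: "DIM('a) + 1 \<le> j" "j < n - 1"
  shows "es ! j \<le> (1 + \<delta>^2) / (1 - \<delta>^2)"
proof (rule eigvals_desc_le_if_quadratic_form_le[OF Smat_carrier Smat_symmetric es,
      where e = "\<lambda>k. (P (k + 1) - P n, of_bool (k < h) :: real)"])
  show "scalar_prod x (Smat \<delta> P n h *\<^sub>v x) \<le> (1 + \<delta>^2) / (1 - \<delta>^2) * scalar_prod x x"
    if "x \<in> carrier_vec (n - 1)"
      "(\<Sum>k<n - 1. x $ k *\<^sub>R (P (k + 1) - P n, of_bool (k < h) :: real)) = 0" for x
    using Smat_quadratic_form_le_on_kernel[OF \<delta> that] .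
qed (use j in simp_all)

lemma Smat_eigenvalue_ge:
  fixes P :: "nat \<Rightarrow> 'a::real_inner"
  assumes \<delta>: "\<delta> > 1" and es: "eigvals_desc (Smat \<delta> P n h) es" and j: "j + 2 \<le> n - 1"
  shows "(1 + \<delta>^2) / (1 - \<delta>^2) \<le> es ! j"
proof -
  have "(1 + \<delta>^2) / (1 - \<delta>^2) \<le> es ! (n - 1 - 1 - (n - 2 - j))"
  proof (rule eigvals_desc_ge_if_quadratic_form_ge[OF Smat_carrier Smat_symmetric es,
        where e = "\<lambda>k. 1 :: real"])
    show "(1 + \<delta>^2) / (1 - \<delta>^2) * scalar_prod x x \<le> scalar_prod x (Smat \<delta> P n h *\<^sub>v x)"
      if "x \<in> carrier_vec (n - 1)" "(\<Sum>k<n - 1. x $ k *\<^sub>R (1 :: real)) = 0" for x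
      using Smat_quadratic_form_ge_on_hyperplane[OF \<delta> that(1)] that(2) by simp
  qed (use j in simp_all)
  moreover have "n - 1 - 1 - (n - 2 - j) = j"
    using j by linarith
  ultimately show ?thesis
    by simp
qed

theorem mainTheorem5:
  fixes \<delta> :: real and P :: "nat \<Rightarrow> real ^ 'd" and n h :: nat and es :: "real list"
  assumes "\<delta> > 1"
    and "n \<ge> 1"
    and "\<And>i j. i \<in> {1..n} \<Longrightarrow> j \<in> {1..n} \<Longrightarrow> i \<noteq> j \<Longrightarrow> P i \<noteq> P j"
    and "\<And>i j. i \<in> {1..n} \<Longrightarrow> j \<in> {1..n} \<Longrightarrow> i \<noteq> j \<Longrightarrow> cdist P i j \<in> {1, \<delta>}"
    and "h \<le> n - 1"
    and "\<And>i. 1 \<le> i \<Longrightarrow> i \<le> h \<Longrightarrow> cdist P i n = 1"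
    and "\<And>i. h < i \<Longrightarrow> i \<le> n - 1 \<Longrightarrow> cdist P i n = \<delta>"
    and "eigvals_desc (Smat \<delta> P n h) es"
  shows "(\<forall>i. CARD('d) + 2 \<le> i \<and> i \<le> n - 2 \<longrightarrow> es ! (i - 1) = (1 + \<delta>^2) / (1 - \<delta>^2))
       \<and> (n \<ge> CARD('d) + 3 \<longrightarrow> es ! (n - 2) \<le> (1 + \<delta>^2) / (1 - \<delta>^2))"
proof -
  have "es ! j \<le> (1 + \<delta>^2) / (1 - \<delta>^2)" if "CARD('d) + 1 \<le> j" "j < n - 1" for j
    using Smat_eigenvalue_le[OF assms(1,8)] that by simp
  moreover have "(1 + \<delta>^2) / (1 - \<delta>^2) \<le> es ! j" if "j + 2 \<le> n - 1" for j
    using Smat_eigenvalue_ge[OF assms(1,8) that] .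
  ultimately show ?thesis
    by (auto intro: antisym)
qed

end
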